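(* Let $\overline M$ be a continuous martingale on $[0,T]$ with $\overline M_0=0$ and let $k>0$ satisfy $$\sup_\tau\Bigl\|\mathbb E\Bigl[\exp\bigl(k(\langle\overline M,\overline M\rangle_T-\langle\overline M,\overline M\rangle_\tau)\bigr)\,\Big|\,\mathcal F_\tau\Bigr]\Bigr\|_{L^\infty}<+\infty,$$ where the supremum is over all stopping times $\tau$ with values in $[0,T]$. Then there exists $\tilde k>k$ such that the same supremum with $k$ replaced by $\tilde k$ is finite. In particular $b(\overline M)>k$.
   Context: The filtered probability space $(\Omega,\mathcal F,(\mathcal F_t)_{t\in[0,T]},\mathbb P)$ satisfies the usual conditions. For a continuous martingale $\overline M$ with $\overline M_0=0$, the critical exponent is $$b(\overline M):=\sup\Bigl\{b\ge0\,\Big|\,\sup_\tau\bigl\|\mathbb E[\exp(b(\langle\overline M,\overline M\rangle_T-\langle\overline M,\overline M\rangle_\tau))\,|\,\mathcal F_\tau]\bigr\|_{L^\infty}<+\infty\Bigr\},$$ where the inner supremum is over stopping times $\tau$ valued in $[0,T]$. *)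

theory Defs
  imports "HOL-Probability.Probability"
begin

text \<open>Time is real; the filtration
  is a family of measures F t indexed by all reals (only t in [0,T] matters,
  stopping times are required to take values in [0,T]).\<close>

definition usual_filtration :: "'a measure \<Rightarrow> (real \<Rightarrow> 'a measure) \<Rightarrow> real \<Rightarrow> bool" where
  "usual_filtration M F T \<longleftrightarrow>
     prob_space M \<and> filtration (space M) F \<and>
     (\<forall>t. sets (F t) \<subseteq> sets M) \<and>
     (\<forall>N \<in> null_sets M. \<forall>S. S \<subseteq> N \<longrightarrow> S \<in> sets (F 0)) \<and>
     (\<forall>t \<in> {0..<T}. sets (F t) = (\<Inter>s \<in> {t<..}. sets (F s)))"

definition stopping_time_on :: "'a measure \<Rightarrow> (real \<Rightarrow> 'a measure) \<Rightarrow> real \<Rightarrow> ('a \<Rightarrow> real) \<Rightarrow> bool" where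
  "stopping_time_on M F T \<tau> \<longleftrightarrow> stopping_time F \<tau> \<and> (\<forall>\<omega> \<in> space M. \<tau> \<omega> \<in> {0..T})"

definition martingale_on :: "'a measure \<Rightarrow> (real \<Rightarrow> 'a measure) \<Rightarrow> real \<Rightarrow> (real \<Rightarrow> 'a \<Rightarrow> real) \<Rightarrow> bool" where
  "martingale_on M F T X \<longleftrightarrow>
     (\<forall>t \<in> {0..T}. X t \<in> borel_measurable (F t) \<and> integrable M (X t)) \<and>
     (\<forall>s t. 0 \<le> s \<longrightarrow> s \<le> t \<longrightarrow> t \<le> T \<longrightarrow>
        (AE \<omega> in M. real_cond_exp M (F s) (X t) \<omega> = X s \<omega>))"

definition continuous_martingale_on :: "'a measure \<Rightarrow> (real \<Rightarrow> 'a measure) \<Rightarrow> real \<Rightarrow> (real \<Rightarrow> 'a \<Rightarrow> real) \<Rightarrow> bool" where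
  "continuous_martingale_on M F T X \<longleftrightarrow>
     martingale_on M F T X \<and> (\<forall>\<omega> \<in> space M. continuous_on {0..T} (\<lambda>t. X t \<omega>))"

definition local_martingale_on :: "'a measure \<Rightarrow> (real \<Rightarrow> 'a measure) \<Rightarrow> real \<Rightarrow> (real \<Rightarrow> 'a \<Rightarrow> real) \<Rightarrow> bool" where
  "local_martingale_on M F T X \<longleftrightarrow>
     (\<exists>\<sigma> :: nat \<Rightarrow> 'a \<Rightarrow> real.
        (\<forall>n. stopping_time_on M F T (\<sigma> n)) \<and>
        (\<forall>n. \<forall>\<omega> \<in> space M. \<sigma> n \<omega> \<le> \<sigma> (Suc n) \<omega>) \<and>
        (AE \<omega> in M. \<exists>n. \<sigma> n \<omega> = T) \<and>
        (\<forall>n. martingale_on M F T (\<lambda>t \<omega>. X (min t (\<sigma> n \<omega>)) \<omega>)))"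

definition is_quadratic_variation :: "'a measure \<Rightarrow> (real \<Rightarrow> 'a measure) \<Rightarrow> real \<Rightarrow> (real \<Rightarrow> 'a \<Rightarrow> real) \<Rightarrow> (real \<Rightarrow> 'a \<Rightarrow> real) \<Rightarrow> bool" where
  "is_quadratic_variation M F T X A \<longleftrightarrow>
     (\<forall>t \<in> {0..T}. A t \<in> borel_measurable (F t)) \<and>
     (\<forall>\<omega> \<in> space M. continuous_on {0..T} (\<lambda>t. A t \<omega>) \<and> mono_on {0..T} (\<lambda>t. A t \<omega>) \<and> A 0 \<omega> = 0) \<and>
     local_martingale_on M F T (\<lambda>t \<omega>. (X t \<omega>)\<^sup>2 - A t \<omega>)"

text \<open>The conditional expectation
  of the nonnegative variable is taken in ennreal (so no integrability is presupposed);
  F_tau is the stopping-time sigma-algebra pre_sigma.\<close>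
definition exp_qv_bounded :: "'a measure \<Rightarrow> (real \<Rightarrow> 'a measure) \<Rightarrow> real \<Rightarrow> (real \<Rightarrow> 'a \<Rightarrow> real) \<Rightarrow> real \<Rightarrow> bool" where
  "exp_qv_bounded M F T A b \<longleftrightarrow>
     (\<exists>C :: real. \<forall>\<tau>. stopping_time_on M F T \<tau> \<longrightarrow>
        (AE \<omega> in M. nn_cond_exp M (filtration.pre_sigma (space M) F \<tau>)
              (\<lambda>\<omega>. ennreal (exp (b * (A T \<omega> - A (\<tau> \<omega>) \<omega>)))) \<omega> \<le> ennreal C))"

definition critical_exponent :: "'a measure \<Rightarrow> (real \<Rightarrow> 'a measure) \<Rightarrow> real \<Rightarrow> (real \<Rightarrow> 'a \<Rightarrow> real) \<Rightarrow> ereal" where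
  "critical_exponent M F T A = Sup (ereal ` {b. b \<ge> 0 \<and> exp_qv_bounded M F T A b})"

end

theory Submission
  imports Defs
begin

text \<open>
  Let \<open>A = \<langle>M,M\<rangle>\<close> and, for a stopping time \<open>\<tau>\<close>, let \<open>U = A T - A \<tau>\<close> be the remaining
  increase.  Assume \<open>E[exp (k U) | F \<tau>] \<le> C\<close> for all stopping times \<open>\<tau>\<close>.

  Probabilistic step: for \<open>x \<ge> 0\<close> let \<open>\<sigma>\<close> be the first time after \<open>\<tau>\<close> at which \<open>A\<close> has
  increased by \<open>x\<close>.  Then \<open>\<sigma>\<close> is a stopping time, \<open>A T - A \<sigma> = U - x\<close> on \<open>{U \<ge> x}\<close>, and
  \<open>B \<inter> {U \<ge> x} \<in> F \<sigma>\<close> for \<open>B \<in> F \<tau>\<close>; conditioning at \<open>\<sigma>\<close> therefore gives the tail estimate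
  \<open>\<integral>\<^bsub>B \<inter> {U \<ge> x}\<^esub> exp (k (U - x)) \<le> c \<mu>(B \<inter> {U \<ge> x})\<close> for all \<open>x \<ge> 0\<close>, \<open>c = max C 1\<close>.

  Measure-theoretic step: from this tail estimate alone, with \<open>h = ln (2c) / k\<close>, the
  integral of \<open>exp (k U)\<close> over \<open>B \<inter> {U \<ge> x + h}\<close> is at most \<open>\<rho> < 1\<close> times the one over
  \<open>B \<inter> {U \<ge> x}\<close>; summing over the layers \<open>{n h \<le> U < (n+1) h}\<close> bounds the integral of
  \<open>exp (k' U)\<close> over \<open>B\<close> by \<open>c' \<mu>(B)\<close> for an explicit \<open>k' > k\<close>.
\<close>

lemma set_nn_integral_le_of_nn_cond_exp_le:
  assumes "finite_measure M" and "subalgebra M G" and f: "f \<in> borel_measurable M"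
    and bound: "AE \<omega> in M. nn_cond_exp M G f \<omega> \<le> c" and B: "B \<in> sets G"
  shows "(\<integral>\<^sup>+\<omega>. indicator B \<omega> * f \<omega> \<partial>M) \<le> c * emeasure M B"
proof -
  interpret finite_measure_subalgebra M G
    using assms by (simp add: finite_measure_subalgebra_def finite_measure_subalgebra_axioms_def)
  have BM: "B \<in> sets M"
    using B subalg by (auto simp: subalgebra_def)
  have "(\<integral>\<^sup>+\<omega>. indicator B \<omega> * f \<omega> \<partial>M) = (\<integral>\<^sup>+\<omega>. indicator B \<omega> * nn_cond_exp M G f \<omega> \<partial>M)"
    using B f by (intro nn_cond_exp_intg[symmetric]) auto
  also have "\<dots> \<le> (\<integral>\<^sup>+\<omega>. c * indicator B \<omega> \<partial>M)"
    using bound by (intro nn_integral_mono_AE) (auto split: split_indicator)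
  also have "\<dots> = c * emeasure M B"
    using BM by (rule nn_integral_cmult_indicator)
  finally show ?thesis .
qed

lemma nn_cond_exp_le_of_set_nn_integral_le:
  assumes "finite_measure M" and "subalgebra M G" and f[measurable]: "f \<in> borel_measurable M"
    and bound: "\<And>B. B \<in> sets G \<Longrightarrow> (\<integral>\<^sup>+\<omega>. indicator B \<omega> * f \<omega> \<partial>M) \<le> c * emeasure M B"
    and c_finite: "c < \<infinity>"
  shows "AE \<omega> in M. nn_cond_exp M G f \<omega> \<le> c"
proof (rule ccontr)
  interpret finite_measure_subalgebra M G
    using assms by (simp add: finite_measure_subalgebra_def finite_measure_subalgebra_axioms_def)
  define g where "g = nn_cond_exp M G f"
  define S where "S = {\<omega> \<in> space M. c < g \<omega>}"
  have g_meas[measurable]: "g \<in> borel_measurable G" "g \<in> borel_measurable M"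
    unfolding g_def by simp_all
  have SG: "S \<in> sets G"
  proof -
    have "{\<omega> \<in> space G. c < g \<omega>} \<in> sets G" by measurable
    moreover have "space G = space M"
      using subalg by (simp add: subalgebra_def)
    ultimately show ?thesis
      by (simp add: S_def)
  qed
  then have SM[measurable]: "S \<in> sets M"
    using subalg by (auto simp: subalgebra_def)
  assume not_bounded: "\<not> (AE \<omega> in M. nn_cond_exp M G f \<omega> \<le> c)"
  have not_AE: "\<not> (AE \<omega> in M. indicator S \<omega> * g \<omega> \<le> c * indicator S \<omega>)"
  proof
    assume "AE \<omega> in M. indicator S \<omega> * g \<omega> \<le> c * indicator S \<omega>"
    with AE_space have "AE \<omega> in M. nn_cond_exp M G f \<omega> \<le> c"
      by eventually_elim (auto simp: g_def S_def indicator_def of_bool_def not_less split: if_splits)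
    with not_bounded show False ..
  qed
  have "c * emeasure M S = (\<integral>\<^sup>+\<omega>. c * indicator S \<omega> \<partial>M)"
    by (simp add: nn_integral_cmult_indicator)
  also have "\<dots> < (\<integral>\<^sup>+\<omega>. indicator S \<omega> * g \<omega> \<partial>M)"
  proof (rule nn_integral_less)
    show "(\<integral>\<^sup>+\<omega>. c * indicator S \<omega> \<partial>M) \<noteq> \<infinity>"
      using c_finite by (simp add: nn_integral_cmult_indicator ennreal_mult_eq_top_iff
          emeasure_eq_measure)
    show "AE \<omega> in M. c * indicator S \<omega> \<le> indicator S \<omega> * g \<omega>"
      by (auto simp: S_def split: split_indicator)
  qed (use not_AE in auto)
  also have "\<dots> = (\<integral>\<^sup>+\<omega>. indicator S \<omega> * f \<omega> \<partial>M)"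
    unfolding g_def using SG by (intro nn_cond_exp_intg) auto
  also have "\<dots> \<le> c * emeasure M S"
    using SG by (rule bound)
  finally show False by simp
qed

text \<open>The constants of the self-improvement: layers of width \<open>layer_width k c\<close>, on which
  the exponential tail integral contracts by \<open>layer_ratio c\<close>; the exponent can then be
  raised until the growth factor per layer is \<open>growth_factor c\<close>.\<close>
definition layer_ratio :: "real \<Rightarrow> real" where
  "layer_ratio c = (2 * c - 2) / (2 * c - 1)"

definition layer_width :: "real \<Rightarrow> real \<Rightarrow> real" where
  "layer_width k c = ln (2 * c) / k"

definition growth_factor :: "real \<Rightarrow> real" where
  "growth_factor c = 2 / (1 + layer_ratio c)"

definition improved_exponent :: "real \<Rightarrow> real \<Rightarrow> real" where
  "improved_exponent k c = k + ln (growth_factor c) / layer_width k c"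

definition improved_constant :: "real \<Rightarrow> real" where
  "improved_constant c = growth_factor c * c / (1 - growth_factor c * layer_ratio c)"

lemma improvement_constants:
  assumes k: "0 < k" and c: "1 \<le> c"
  shows "0 < layer_width k c" and "exp (k * layer_width k c) = 2 * c"
    and "0 \<le> layer_ratio c" and "layer_ratio c < 1"
    and "1 < growth_factor c" and "growth_factor c * layer_ratio c < 1"
    and "k < improved_exponent k c"
    and "exp ((improved_exponent k c - k) * layer_width k c) = growth_factor c"
    and "0 \<le> improved_constant c"
proof -
  show h: "0 < layer_width k c"
    using k c by (simp add: layer_width_def)
  show "exp (k * layer_width k c) = 2 * c"
    using k c by (simp add: layer_width_def)
  show \<rho>0: "0 \<le> layer_ratio c" and \<rho>1: "layer_ratio c < 1"
    using c by (simp_all add: layer_ratio_def divide_simps)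
  show \<gamma>1: "1 < growth_factor c" and \<gamma>\<rho>: "growth_factor c * layer_ratio c < 1"
    using \<rho>0 \<rho>1 by (simp_all add: growth_factor_def divide_simps)
  show "k < improved_exponent k c"
    using h \<gamma>1 by (simp add: improved_exponent_def)
  show "exp ((improved_exponent k c - k) * layer_width k c) = growth_factor c"
    using h \<gamma>1 by (simp add: improved_exponent_def)
  show "0 \<le> improved_constant c"
    using \<gamma>1 \<gamma>\<rho> c by (simp add: improved_constant_def)
qed

text \<open>The arithmetic core of the contraction: if the integral \<open>D + Y\<close> over a superlevel
  set splits into a layer part \<open>D\<close> and a tail part \<open>Y\<close>, and the values of the integrand on
  the tail are at least twice \<open>c\<close> times those on the layer, then \<open>Y\<close> is a fixed fraction
  of \<open>D + Y\<close>.\<close>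
lemma layer_ratio_bound:
  fixes D Y mL mE :: ennreal and a c :: real
  assumes fin: "mL < \<infinity>" "mE < \<infinity>" and a: "0 < a" and c: "1 \<le> c"
    and total: "D + Y \<le> ennreal a * (ennreal c * (mL + mE))"
    and layer: "ennreal a * mL \<le> D"
    and tail: "ennreal (2 * a * c) * mE \<le> Y"
  shows "Y \<le> ennreal (layer_ratio c) * (D + Y)"
proof -
  obtain l e where l: "mL = ennreal l" "0 \<le> l" and e: "mE = ennreal e" "0 \<le> e"
    using fin by (cases mL; cases mE) auto
  have total_real: "ennreal a * (ennreal c * (mL + mE)) = ennreal (a * (c * (l + e)))"
    using a c l e by (simp add: ennreal_mult)
  then obtain d y where d: "D = ennreal d" "0 \<le> d" and y: "Y = ennreal y" "0 \<le> y"
    using total by (cases D; cases Y) (auto simp: top_unique)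
  have "ennreal (d + y) \<le> ennreal (a * (c * (l + e)))"
    using total d y by (simp add: total_real)
  then have total': "d + y \<le> a * (c * (l + e))"
    using a c l e by (subst (asm) ennreal_le_iff) auto
  have layer': "a * l \<le> d"
    using layer a d l by (simp add: flip: ennreal_mult)
  have tail': "2 * a * c * e \<le> y"
    using tail a c y e by (simp add: flip: ennreal_mult)
  have "c * (a * l) \<le> c * d"
    using layer' c by (intro mult_left_mono) auto
  then have "(2 * c - 1) * y \<le> (2 * c - 2) * (d + y)"
    using total' tail' by (simp add: algebra_simps)
  then have "y \<le> layer_ratio c * (d + y)"
    using c by (simp add: layer_ratio_def field_simps)
  moreover have "0 \<le> layer_ratio c"
    using c by (simp add: layer_ratio_def)
  ultimately show ?thesis
    using d y by (simp add: flip: ennreal_plus ennreal_mult)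
qed

lemma geometric_layer_sum:
  fixes \<gamma> \<rho> :: real
  assumes "0 \<le> \<gamma>" "0 \<le> \<rho>" "\<gamma> * \<rho> < 1"
  shows "(\<lambda>n. \<gamma> ^ Suc n * \<rho> ^ n) sums (\<gamma> / (1 - \<gamma> * \<rho>))"
proof -
  have "(\<lambda>n. \<gamma> * (\<gamma> * \<rho>) ^ n) sums (\<gamma> * (1 / (1 - \<gamma> * \<rho>)))"
    using assms by (intro sums_mult geometric_sums) auto
  then show ?thesis
    by (simp add: power_mult_distrib mult.assoc)
qed

lemma floor_layer_bounds:
  fixes h u :: real
  assumes "0 < h" and "0 \<le> u"
  shows "real (nat \<lfloor>u / h\<rfloor>) * h \<le> u" and "u < real (nat \<lfloor>u / h\<rfloor>) * h + h"
proof -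
  have "real (nat \<lfloor>u / h\<rfloor>) = of_int \<lfloor>u / h\<rfloor>"
    using assms by simp
  then have below: "real (nat \<lfloor>u / h\<rfloor>) \<le> u / h" and above: "u / h < real (nat \<lfloor>u / h\<rfloor>) + 1"
    by linarith+
  show "real (nat \<lfloor>u / h\<rfloor>) * h \<le> u"
    using below assms(1) pos_le_divide_eq by blast
  have "u < (real (nat \<lfloor>u / h\<rfloor>) + 1) * h"
    using above assms(1) pos_divide_less_eq by blast
  then show "u < real (nat \<lfloor>u / h\<rfloor>) * h + h"
    by (simp add: algebra_simps)
qed

lemma exp_on_layer:
  fixes h u k k' :: real
  assumes h: "0 < h" and u: "0 \<le> u" and kk': "k \<le> k'"
  shows "exp (k' * u) \<le> exp ((k' - k) * h) ^ Suc (nat \<lfloor>u / h\<rfloor>) * exp (k * u)"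
proof -
  define n where "n = nat \<lfloor>u / h\<rfloor>"
  have "u \<le> real (Suc n) * h"
    using floor_layer_bounds(2)[OF h u] by (simp add: n_def algebra_simps)
  then have "(k' - k) * u \<le> (k' - k) * (real (Suc n) * h)"
    using kk' by (intro mult_left_mono) auto
  then have "exp ((k' - k) * u) \<le> exp (real (Suc n) * ((k' - k) * h))"
    by (simp add: algebra_simps)
  also have "\<dots> = exp ((k' - k) * h) ^ Suc n"
    by (rule exp_of_nat_mult)
  finally have "exp ((k' - k) * u) * exp (k * u) \<le> exp ((k' - k) * h) ^ Suc n * exp (k * u)"
    by simp
  then show ?thesis
    by (simp add: n_def mult_exp_exp algebra_simps)
qed

lemma restricted_Collect_in_sets:
  assumes "B \<in> sets M" and "Measurable.pred M P"
  shows "{\<omega>\<in>B. P \<omega>} \<in> sets M"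
proof -
  have "{\<omega>\<in>B. P \<omega>} = B \<inter> {\<omega>\<in>space M. P \<omega>}"
    using sets.sets_into_space[OF assms(1)] by auto
  then show ?thesis
    using assms by (auto simp: Measurable.pred_def)
qed

lemma set_nn_integral_lower_bound:
  assumes "S \<in> sets M" and "\<And>\<omega>. \<omega> \<in> S \<Longrightarrow> a \<le> f \<omega>"
  shows "a * emeasure M S \<le> (\<integral>\<^sup>+\<omega>. indicator S \<omega> * f \<omega> \<partial>M)"
proof -
  have "a * emeasure M S = (\<integral>\<^sup>+\<omega>. a * indicator S \<omega> \<partial>M)"
    using assms(1) by (simp add: nn_integral_cmult_indicator)
  also have "\<dots> \<le> (\<integral>\<^sup>+\<omega>. indicator S \<omega> * f \<omega> \<partial>M)"
    using assms(2) by (intro nn_integral_mono) (auto split: split_indicator)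
  finally show ?thesis .
qed

definition tail_integral :: "'a measure \<Rightarrow> 'a set \<Rightarrow> ('a \<Rightarrow> real) \<Rightarrow> real \<Rightarrow> real \<Rightarrow> ennreal" where
  "tail_integral M B U k x = (\<integral>\<^sup>+\<omega>. indicator {\<omega>\<in>B. x \<le> U \<omega>} \<omega> * ennreal (exp (k * U \<omega>)) \<partial>M)"

definition layer :: "'a set \<Rightarrow> ('a \<Rightarrow> real) \<Rightarrow> real \<Rightarrow> nat \<Rightarrow> 'a set" where
  "layer B U h n = {\<omega>\<in>B. nat \<lfloor>U \<omega> / h\<rfloor> = n}"

context
  fixes M :: "'a measure" and U :: "'a \<Rightarrow> real" and B :: "'a set" and k c :: real
  assumes finite: "finite_measure M"
    and U_meas[measurable]: "U \<in> borel_measurable M"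
    and B_meas[measurable]: "B \<in> sets M"
    and U_nonneg: "\<And>\<omega>. \<omega> \<in> B \<Longrightarrow> 0 \<le> U \<omega>"
    and k: "0 < k" and c: "1 \<le> c"
    and tail_bound: "\<And>x. 0 \<le> x \<Longrightarrow>
      (\<integral>\<^sup>+\<omega>. indicator {\<omega>\<in>B. x \<le> U \<omega>} \<omega> * ennreal (exp (k * (U \<omega> - x))) \<partial>M)
        \<le> ennreal c * emeasure M {\<omega>\<in>B. x \<le> U \<omega>}"
begin

lemma slab_in_sets[measurable]:
  "{\<omega>\<in>B. x \<le> U \<omega>} \<in> sets M" "{\<omega>\<in>B. x \<le> U \<omega> \<and> U \<omega> < y} \<in> sets M"
  by (intro restricted_Collect_in_sets; measurable)+

lemma tail_integral_le:
  assumes x: "0 \<le> x"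
  shows "tail_integral M B U k x \<le> ennreal (exp (k * x)) * (ennreal c * emeasure M {\<omega>\<in>B. x \<le> U \<omega>})"
proof -
  have split_exp: "ennreal (exp (k * u)) = ennreal (exp (k * x)) * ennreal (exp (k * (u - x)))" for u
    unfolding ennreal_mult'[OF exp_ge_zero, symmetric] exp_add[symmetric] by (simp add: algebra_simps)
  have "tail_integral M B U k x =
      (\<integral>\<^sup>+\<omega>. ennreal (exp (k * x)) * (indicator {\<omega>\<in>B. x \<le> U \<omega>} \<omega> * ennreal (exp (k * (U \<omega> - x)))) \<partial>M)"
    unfolding tail_integral_def
    by (intro nn_integral_cong)
       (subst split_exp, simp add: mult.left_commute)
  also have "\<dots> = ennreal (exp (k * x)) *
      (\<integral>\<^sup>+\<omega>. indicator {\<omega>\<in>B. x \<le> U \<omega>} \<omega> * ennreal (exp (k * (U \<omega> - x))) \<partial>M)"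
    by (rule nn_integral_cmult) measurable
  also have "\<dots> \<le> ennreal (exp (k * x)) * (ennreal c * emeasure M {\<omega>\<in>B. x \<le> U \<omega>})"
    using tail_bound[OF x] by (rule mult_left_mono) simp
  finally show ?thesis .
qed

text \<open>Passing from level \<open>x\<close> to level \<open>x + h\<close> contracts the tail integral by
  \<open>layer_ratio c\<close>, because \<open>exp (k h) = 2 c\<close>.\<close>
lemma tail_integral_contraction:
  assumes x: "0 \<le> x"
  shows "tail_integral M B U k (x + layer_width k c) \<le> ennreal (layer_ratio c) * tail_integral M B U k x"
proof -
  interpret finite_measure M by (rule finite)
  define h where "h = layer_width k c"
  have h: "0 < h" "exp (k * h) = 2 * c"
    using improvement_constants[OF k c] by (simp_all add: h_def)
  define L where "L = {\<omega>\<in>B. x \<le> U \<omega> \<and> U \<omega> < x + h}"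
  define D where "D = (\<integral>\<^sup>+\<omega>. indicator L \<omega> * ennreal (exp (k * U \<omega>)) \<partial>M)"
  define a where "a = exp (k * x)"
  have L_meas[measurable]: "L \<in> sets M"
    unfolding L_def by measurable
  have partition: "{\<omega>\<in>B. x \<le> U \<omega>} = L \<union> {\<omega>\<in>B. x + h \<le> U \<omega>}" "L \<inter> {\<omega>\<in>B. x + h \<le> U \<omega>} = {}"
    using h by (auto simp: L_def)
  have split_integral: "tail_integral M B U k x = D + tail_integral M B U k (x + h)"
  proof -
    have "tail_integral M B U k x = (\<integral>\<^sup>+\<omega>. indicator L \<omega> * ennreal (exp (k * U \<omega>))
        + indicator {\<omega>\<in>B. x + h \<le> U \<omega>} \<omega> * ennreal (exp (k * U \<omega>)) \<partial>M)"
      unfolding tail_integral_def partition(1)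
      by (intro nn_integral_cong) (use partition(2) in \<open>auto split: split_indicator\<close>)
    also have "\<dots> = D + tail_integral M B U k (x + h)"
      unfolding D_def tail_integral_def by (intro nn_integral_add) measurable
    finally show ?thesis .
  qed
  have total: "D + tail_integral M B U k (x + h)
      \<le> ennreal a * (ennreal c * (emeasure M L + emeasure M {\<omega>\<in>B. x + h \<le> U \<omega>}))"
    using tail_integral_le[OF x] partition
    by (simp add: split_integral a_def plus_emeasure)
  have layer: "ennreal a * emeasure M L \<le> D"
    unfolding D_def a_def using k by (intro set_nn_integral_lower_bound) (auto simp: L_def)
  have tail: "ennreal (2 * a * c) * emeasure M {\<omega>\<in>B. x + h \<le> U \<omega>} \<le> tail_integral M B U k (x + h)"
  proof -
    have "2 * a * c = exp (k * (x + h))"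
      using h by (simp add: a_def distrib_left exp_add)
    then show ?thesis
      unfolding tail_integral_def using k by (intro set_nn_integral_lower_bound) auto
  qed
  have "tail_integral M B U k (x + h) \<le> ennreal (layer_ratio c) * (D + tail_integral M B U k (x + h))"
    by (rule layer_ratio_bound[OF _ _ _ c total layer tail])
       (simp_all add: a_def less_top[symmetric])
  then show ?thesis
    by (simp add: split_integral h_def)
qed

lemma tail_integral_geometric_decay:
  "tail_integral M B U k (real n * layer_width k c) \<le> ennreal (layer_ratio c ^ n) * (ennreal c * emeasure M B)"
proof (induction n)
  case 0
  have "tail_integral M B U k 0 \<le> ennreal c * emeasure M {\<omega>\<in>B. 0 \<le> U \<omega>}"
    using tail_integral_le[of 0] by simp
  also have "{\<omega>\<in>B. 0 \<le> U \<omega>} = B"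
    using U_nonneg by auto
  finally show ?case by simp
next
  case (Suc n)
  note constants = improvement_constants[OF k c]
  have "tail_integral M B U k (real (Suc n) * layer_width k c)
      = tail_integral M B U k (real n * layer_width k c + layer_width k c)"
    by (simp add: algebra_simps)
  also have "\<dots> \<le> ennreal (layer_ratio c) * tail_integral M B U k (real n * layer_width k c)"
    using constants by (intro tail_integral_contraction) simp
  also have "\<dots> \<le> ennreal (layer_ratio c) * (ennreal (layer_ratio c ^ n) * (ennreal c * emeasure M B))"
    by (intro mult_left_mono Suc.IH) simp
  also have "\<dots> = ennreal (layer_ratio c ^ Suc n) * (ennreal c * emeasure M B)"
    using constants by (simp add: ennreal_mult' mult.assoc)
  finally show ?case .
qed

lemma layer_in_sets[measurable]: "layer B U h n \<in> sets M"
  unfolding layer_def by (intro restricted_Collect_in_sets) measurable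

lemma layer_integral_bound:
  "(\<integral>\<^sup>+\<omega>. indicator (layer B U (layer_width k c) n) \<omega> * ennreal (exp (improved_exponent k c * U \<omega>)) \<partial>M)
    \<le> ennreal (growth_factor c ^ Suc n * layer_ratio c ^ n) * (ennreal c * emeasure M B)"
proof -
  note constants = improvement_constants[OF k c]
  define h where "h = layer_width k c"
  define \<gamma> where "\<gamma> = growth_factor c"
  define k' where "k' = improved_exponent k c"
  have h: "0 < h" and \<gamma>: "1 < \<gamma>" "exp ((k' - k) * h) = \<gamma>" and kk': "k \<le> k'"
    using constants by (simp_all add: h_def \<gamma>_def k'_def)
  have pointwise: "indicator (layer B U h n) \<omega> * ennreal (exp (k' * U \<omega>))
      \<le> ennreal (\<gamma> ^ Suc n) * (indicator {\<omega>\<in>B. real n * h \<le> U \<omega>} \<omega> * ennreal (exp (k * U \<omega>)))" for \<omega>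
  proof (cases "\<omega> \<in> layer B U h n")
    case True
    then have in_B: "\<omega> \<in> B" and n: "n = nat \<lfloor>U \<omega> / h\<rfloor>"
      by (auto simp: layer_def)
    have "exp (k' * U \<omega>) \<le> \<gamma> ^ Suc n * exp (k * U \<omega>)"
      using exp_on_layer[OF h U_nonneg[OF in_B] kk'] by (simp add: n \<gamma>)
    then have "ennreal (exp (k' * U \<omega>)) \<le> ennreal (\<gamma> ^ Suc n) * ennreal (exp (k * U \<omega>))"
      using \<gamma> by (simp add: ennreal_mult'[symmetric])
    then show ?thesis
      using True in_B floor_layer_bounds(1)[OF h U_nonneg[OF in_B]] by (simp add: n)
  qed simp
  have "(\<integral>\<^sup>+\<omega>. indicator (layer B U h n) \<omega> * ennreal (exp (k' * U \<omega>)) \<partial>M)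
      \<le> ennreal (\<gamma> ^ Suc n) * tail_integral M B U k (real n * h)"
    unfolding tail_integral_def
    by (subst nn_integral_cmult[symmetric]) (measurable, intro nn_integral_mono pointwise)
  also have "\<dots> \<le> ennreal (\<gamma> ^ Suc n) * (ennreal (layer_ratio c ^ n) * (ennreal c * emeasure M B))"
    unfolding h_def by (intro mult_left_mono tail_integral_geometric_decay) simp
  also have "\<dots> = ennreal (\<gamma> ^ Suc n * layer_ratio c ^ n) * (ennreal c * emeasure M B)"
    using \<gamma> constants by (simp add: ennreal_mult' mult.assoc)
  finally show ?thesis
    unfolding h_def \<gamma>_def k'_def .
qed

lemma improved_exponential_bound:
  "(\<integral>\<^sup>+\<omega>. indicator B \<omega> * ennreal (exp (improved_exponent k c * U \<omega>)) \<partial>M)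
    \<le> ennreal (improved_constant c) * emeasure M B"
proof -
  note constants = improvement_constants[OF k c]
  define \<rho> where "\<rho> = layer_ratio c"
  define \<gamma> where "\<gamma> = growth_factor c"
  define k' where "k' = improved_exponent k c"
  define L where "L = layer B U (layer_width k c)"
  have \<rho>: "0 \<le> \<rho>" and \<gamma>: "1 < \<gamma>" "\<gamma> * \<rho> < 1"
    using constants by (simp_all add: \<rho>_def \<gamma>_def)
  have partition: "disjoint_family L" "(\<Union>n. L n) = B"
    by (auto simp: disjoint_family_on_def L_def layer_def)
  have "(\<integral>\<^sup>+\<omega>. indicator B \<omega> * ennreal (exp (k' * U \<omega>)) \<partial>M)
      = (\<integral>\<^sup>+\<omega>. (\<Sum>n. indicator (L n) \<omega> * ennreal (exp (k' * U \<omega>))) \<partial>M)"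
    by (simp add: suminf_indicator[OF partition(1)] partition(2))
  also have "\<dots> = (\<Sum>n. \<integral>\<^sup>+\<omega>. indicator (L n) \<omega> * ennreal (exp (k' * U \<omega>)) \<partial>M)"
    unfolding L_def by (rule nn_integral_suminf) measurable
  also have "\<dots> \<le> (\<Sum>n. ennreal (\<gamma> ^ Suc n * \<rho> ^ n)) * (ennreal c * emeasure M B)"
    unfolding ennreal_suminf_multc[symmetric] L_def k'_def \<gamma>_def \<rho>_def
    by (intro suminf_le layer_integral_bound) auto
  also have "(\<Sum>n. ennreal (\<gamma> ^ Suc n * \<rho> ^ n)) = ennreal (\<gamma> / (1 - \<gamma> * \<rho>))"
    using geometric_layer_sum[of \<gamma> \<rho>] \<gamma> \<rho>
    by (subst suminf_ennreal2) (auto simp: sums_iff)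
  also have "ennreal (\<gamma> / (1 - \<gamma> * \<rho>)) * (ennreal c * emeasure M B)
      = ennreal (\<gamma> / (1 - \<gamma> * \<rho>) * c) * emeasure M B"
    using \<gamma> c by (subst ennreal_mult) (auto simp: mult.assoc)
  also have "\<gamma> / (1 - \<gamma> * \<rho>) * c = improved_constant c"
    by (simp add: improved_constant_def \<gamma>_def \<rho>_def)
  finally show ?thesis
    unfolding k'_def .
qed

end

definition first_hit :: "(real \<Rightarrow> real) \<Rightarrow> real \<Rightarrow> real \<Rightarrow> real \<Rightarrow> real" where
  "first_hit f a b x = (if x \<le> f b then Inf {s \<in> {a..b}. x \<le> f s} else b)"

lemma first_hit_least:
  fixes f :: "real \<Rightarrow> real"
  assumes cont: "continuous_on {a..b} f" and ab: "a \<le> b" and reached: "x \<le> f b"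
  shows "first_hit f a b x \<in> {s \<in> {a..b}. x \<le> f s}"
    and "\<And>s. s \<in> {a..b} \<Longrightarrow> x \<le> f s \<Longrightarrow> first_hit f a b x \<le> s"
proof -
  define S where "S = {s \<in> {a..b}. x \<le> f s}"
  have "closed S"
    unfolding S_def by (rule continuous_on_closed_Collect_le[OF continuous_on_const cont]) simp
  moreover have "b \<in> S" and "bdd_below S"
    using ab reached by (auto simp: S_def intro: bdd_belowI[of _ a])
  ultimately have "Inf S \<in> S" and "\<And>s. s \<in> S \<Longrightarrow> Inf S \<le> s"
    using closed_contains_Inf cInf_lower by blast+
  then show "first_hit f a b x \<in> {s \<in> {a..b}. x \<le> f s}"
    and "\<And>s. s \<in> {a..b} \<Longrightarrow> x \<le> f s \<Longrightarrow> first_hit f a b x \<le> s"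
    using reached by (simp_all add: first_hit_def S_def)
qed

lemma first_hit_in_interval:
  fixes f :: "real \<Rightarrow> real"
  assumes "continuous_on {a..b} f" and "a \<le> b"
  shows "first_hit f a b x \<in> {a..b}"
  using first_hit_least[OF assms] assms(2) by (cases "x \<le> f b") (auto simp: first_hit_def)

text \<open>By the intermediate value theorem the level is attained exactly.\<close>
lemma first_hit_value:
  fixes f :: "real \<Rightarrow> real"
  assumes cont: "continuous_on {a..b} f" and ab: "a \<le> b"
    and start: "f a \<le> x" and reached: "x \<le> f b"
  shows "f (first_hit f a b x) = x"
proof -
  let ?r = "first_hit f a b x"
  have r: "a \<le> ?r" "?r \<le> b" "x \<le> f ?r"
    using first_hit_least(1)[OF cont ab reached] by auto
  have "continuous_on {a..?r} f"
    using cont r by (auto elim: continuous_on_subset)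
  then obtain s where s: "a \<le> s" "s \<le> ?r" "f s = x"
    using IVT'[of f a x ?r] start r by blast
  then have "?r \<le> s"
    using r by (intro first_hit_least(2)[OF cont ab reached]) auto
  then show ?thesis
    using s by simp
qed

text \<open>The first hit has occurred by time \<open>t\<close> iff the level has been reached by \<open>t\<close>;
  this makes hitting times stopping times.\<close>
lemma first_hit_le_iff:
  fixes f :: "real \<Rightarrow> real"
  assumes cont: "continuous_on {a..b} f" and mono: "mono_on {a..b} f" and ab: "a \<le> b"
  shows "first_hit f a b x \<le> t \<longleftrightarrow> b \<le> t \<or> (a \<le> t \<and> x \<le> f t)"
proof (cases "b \<le> t")
  case True
  then show ?thesis
    using first_hit_in_interval[OF cont ab, of x] by auto
next
  case t_below: False
  show ?thesis
  proof
    assume hit: "first_hit f a b x \<le> t"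
    show "b \<le> t \<or> (a \<le> t \<and> x \<le> f t)"
    proof (cases "x \<le> f b")
      case True
      then have "first_hit f a b x \<in> {a..b}" "x \<le> f (first_hit f a b x)"
        using first_hit_least(1)[OF cont ab] by auto
      then show ?thesis
        using hit t_below mono_onD[OF mono, of "first_hit f a b x" t] by auto
    next
      case False
      then show ?thesis
        using hit t_below by (simp add: first_hit_def)
    qed
  next
    assume "b \<le> t \<or> (a \<le> t \<and> x \<le> f t)"
    then have t: "a \<le> t" "t \<le> b" "x \<le> f t"
      using t_below by auto
    then have "x \<le> f b"
      using mono_onD[OF mono, of t b] ab by auto
    then show "first_hit f a b x \<le> t"
      using first_hit_least(2)[OF cont ab] t by auto
  qed
qed

text \<open>A process read off at a random time taking only finitely many values \<open>s j\<close>,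
  \<open>j \<le> J\<close>, is measurable as soon as each \<open>A (s j)\<close> is: it is a finite sum of
  measurable functions.\<close>
lemma measurable_at_indexed_time:
  fixes A :: "real \<Rightarrow> 'a \<Rightarrow> real" and \<iota> :: "'a \<Rightarrow> nat"
  assumes \<iota>_meas[measurable]: "\<iota> \<in> N \<rightarrow>\<^sub>M count_space UNIV"
    and \<iota>_bounded: "\<And>\<omega>. \<omega> \<in> space N \<Longrightarrow> \<iota> \<omega> \<le> J"
    and meas: "\<And>j. j \<le> J \<Longrightarrow> A (s j) \<in> borel_measurable N"
  shows "(\<lambda>\<omega>. A (s (\<iota> \<omega>)) \<omega>) \<in> borel_measurable N"
proof -
  have "(\<lambda>\<omega>. if \<iota> \<omega> = j then A (s j) \<omega> else 0) \<in> borel_measurable N" if "j \<le> J" for j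
    using meas[OF that] by measurable
  then have "(\<lambda>\<omega>. \<Sum>j\<le>J. if \<iota> \<omega> = j then A (s j) \<omega> else 0) \<in> borel_measurable N"
    by (intro borel_measurable_sum) auto
  moreover have "A (s (\<iota> \<omega>)) \<omega> = (\<Sum>j\<le>J. if \<iota> \<omega> = j then A (s j) \<omega> else 0)"
    if "\<omega> \<in> space N" for \<omega>
    using \<iota>_bounded[OF that] by simp
  ultimately show ?thesis
    by (simp cong: measurable_cong)
qed

text \<open>The random time is approximated from below by
  random times taking values on finer and finer grids.\<close>
lemma measurable_at_random_time:
  fixes A :: "real \<Rightarrow> 'a \<Rightarrow> real" and \<sigma> :: "'a \<Rightarrow> real"
  assumes t: "0 \<le> t"
    and meas: "\<And>s. s \<in> {0..t} \<Longrightarrow> A s \<in> borel_measurable N"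
    and cont: "\<And>\<omega>. \<omega> \<in> space N \<Longrightarrow> continuous_on {0..t} (\<lambda>s. A s \<omega>)"
    and \<sigma>_meas[measurable]: "\<sigma> \<in> borel_measurable N"
    and \<sigma>_range: "\<And>\<omega>. \<omega> \<in> space N \<Longrightarrow> \<sigma> \<omega> \<in> {0..t}"
  shows "(\<lambda>\<omega>. A (\<sigma> \<omega>) \<omega>) \<in> borel_measurable N"
proof -
  define mesh :: "nat \<Rightarrow> real" where "mesh n = 1 / real (Suc n)" for n
  define index where "index n \<omega> = nat \<lfloor>\<sigma> \<omega> / mesh n\<rfloor>" for n \<omega>
  have mesh_pos: "0 < mesh n" for n
    by (simp add: mesh_def)
  have grid_bounds: "real (index n \<omega>) * mesh n \<le> \<sigma> \<omega>" "\<sigma> \<omega> < real (index n \<omega>) * mesh n + mesh n"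
    if "\<omega> \<in> space N" for n \<omega>
    unfolding index_def using floor_layer_bounds[OF mesh_pos] \<sigma>_range[OF that] by auto
  have grid_meas: "(\<lambda>\<omega>. A (real (index n \<omega>) * mesh n) \<omega>) \<in> borel_measurable N" for n
  proof (rule measurable_at_indexed_time[where J = "nat \<lfloor>t / mesh n\<rfloor>"])
    show "index n \<in> N \<rightarrow>\<^sub>M count_space UNIV"
      unfolding index_def by measurable
    show "index n \<omega> \<le> nat \<lfloor>t / mesh n\<rfloor>" if "\<omega> \<in> space N" for \<omega>
      using \<sigma>_range[OF that] mesh_pos[of n] unfolding index_def
      by (intro nat_mono floor_mono divide_right_mono) auto
    show "A (real j * mesh n) \<in> borel_measurable N" if "j \<le> nat \<lfloor>t / mesh n\<rfloor>" for j
    proof (rule meas)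
      have "real j * mesh n \<le> real (nat \<lfloor>t / mesh n\<rfloor>) * mesh n"
        using that mesh_pos[of n] by (intro mult_right_mono) auto
      also have "\<dots> \<le> t"
        by (rule floor_layer_bounds(1)[OF mesh_pos t])
      finally show "real j * mesh n \<in> {0..t}"
        using mesh_pos[of n] by auto
    qed
  qed
  show ?thesis
  proof (rule borel_measurable_LIMSEQ_real[OF _ grid_meas])
    fix \<omega> assume \<omega>: "\<omega> \<in> space N"
    have "mesh \<longlonglongrightarrow> 0"
      unfolding mesh_def by (rule LIMSEQ_Suc[OF lim_inverse_n'])
    then have lower: "(\<lambda>n. \<sigma> \<omega> - mesh n) \<longlonglongrightarrow> \<sigma> \<omega>"
      using tendsto_diff[OF tendsto_const, of mesh 0 sequentially "\<sigma> \<omega>"] by simp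
    have "\<sigma> \<omega> - mesh n \<le> real (index n \<omega>) * mesh n" "real (index n \<omega>) * mesh n \<le> \<sigma> \<omega>" for n
      using grid_bounds[OF \<omega>, of n] by linarith+
    then have grid_lim: "(\<lambda>n. real (index n \<omega>) * mesh n) \<longlonglongrightarrow> \<sigma> \<omega>"
      by (intro tendsto_sandwich[OF _ _ lower tendsto_const] always_eventually allI)
    moreover have "real (index n \<omega>) * mesh n \<in> {0..t}" for n
      using grid_bounds[OF \<omega>, of n] \<sigma>_range[OF \<omega>] mesh_pos[of n] by auto
    ultimately show "(\<lambda>n. A (real (index n \<omega>) * mesh n) \<omega>) \<longlonglongrightarrow> A (\<sigma> \<omega>) \<omega>"
      using \<sigma>_range[OF \<omega>]
      by (intro continuous_on_tendsto_compose[OF cont[OF \<omega>]]) (auto intro: always_eventually)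
  qed
qed

lemma (in filtration) stopping_time_measurable_le:
  assumes "stopping_time F \<sigma>" and "\<And>\<omega>. \<omega> \<in> \<Omega> \<Longrightarrow> \<sigma> \<omega> \<le> t"
  shows "\<sigma> \<in> borel_measurable (F t)"
proof (rule borel_measurableI_le)
  fix s
  show "{\<omega> \<in> space (F t). \<sigma> \<omega> \<le> s} \<in> sets (F t)"
  proof (cases "t \<le> s")
    case True
    then have "{\<omega> \<in> space (F t). \<sigma> \<omega> \<le> s} = space (F t)"
      using assms(2) by (force simp: space_F)
    then show ?thesis by simp
  next
    case False
    then show ?thesis
      using stopping_time_le_const[OF assms(1), of s t] by (simp add: Measurable.pred_def)
  qed
qed

lemma (in filtration) subalgebra_F:
  assumes "s \<le> t"
  shows "subalgebra (F t) (F s)"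
  using sets_F_mono[OF assms] by (simp add: subalgebra_def space_F)

locale continuous_increasing_process = filtration "space M" F
  for M :: "'a measure" and F :: "real \<Rightarrow> 'a measure" and T :: real and A :: "real \<Rightarrow> 'a \<Rightarrow> real" +
  assumes sets_F_subset: "\<And>t. sets (F t) \<subseteq> sets M"
    and adapted: "\<And>t. t \<in> {0..T} \<Longrightarrow> A t \<in> borel_measurable (F t)"
    and path_continuous: "\<And>\<omega>. \<omega> \<in> space M \<Longrightarrow> continuous_on {0..T} (\<lambda>t. A t \<omega>)"
    and path_mono: "\<And>\<omega>. \<omega> \<in> space M \<Longrightarrow> mono_on {0..T} (\<lambda>t. A t \<omega>)"
    and horizon_nonneg: "0 \<le> T"
begin

definition remaining_increase :: "('a \<Rightarrow> real) \<Rightarrow> 'a \<Rightarrow> real" where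
  "remaining_increase \<tau> \<omega> = A T \<omega> - A (\<tau> \<omega>) \<omega>"

definition hitting_time :: "('a \<Rightarrow> real) \<Rightarrow> real \<Rightarrow> 'a \<Rightarrow> real" where
  "hitting_time \<tau> x \<omega> = first_hit (\<lambda>s. A s \<omega>) (\<tau> \<omega>) T (A (\<tau> \<omega>) \<omega> + x)"

lemma stopping_time_onD:
  assumes "stopping_time_on M F T \<tau>"
  shows "stopping_time F \<tau>" and "\<And>\<omega>. \<omega> \<in> space M \<Longrightarrow> \<tau> \<omega> \<in> {0..T}"
  using assms by (auto simp: stopping_time_on_def)

lemma subalgebra_M: "subalgebra M (F t)"
  using sets_F_subset by (simp add: subalgebra_def space_F)

lemma pre_sigma_subalgebra:
  assumes st: "stopping_time_on M F T \<tau>"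
  shows "subalgebra M (pre_sigma \<tau>)"
proof -
  have "S \<in> sets M" if S: "S \<in> sets (pre_sigma \<tau>)" for S
  proof -
    have "{\<omega>\<in>S. \<tau> \<omega> \<le> T} \<in> sets (F T)"
      using sets_pre_sigmaD[OF stopping_time_onD(1)[OF st] S] .
    moreover have "{\<omega>\<in>S. \<tau> \<omega> \<le> T} = S"
      using sets.sets_into_space[OF S] stopping_time_onD(2)[OF st] by (auto simp: space_pre_sigma)
    ultimately show ?thesis
      using sets_F_subset by auto
  qed
  then show ?thesis
    by (auto simp: subalgebra_def space_pre_sigma)
qed

text \<open>The process read off at a stopping time truncated at a deterministic time \<open>t\<close> is
  \<open>F t\<close>-measurable, because its paths are continuous.\<close>
lemma stopped_process_measurable:
  assumes st: "stopping_time_on M F T \<tau>" and t: "0 \<le> t" "t \<le> T"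
  shows "(\<lambda>\<omega>. A (min (\<tau> \<omega>) t) \<omega>) \<in> borel_measurable (F t)"
proof (rule measurable_at_random_time[OF t(1), where \<sigma> = "\<lambda>\<omega>. min (\<tau> \<omega>) t"])
  show "A s \<in> borel_measurable (F t)" if "s \<in> {0..t}" for s
    using adapted[of s] that t by (auto intro: measurable_from_subalg[OF subalgebra_F])
  show "continuous_on {0..t} (\<lambda>s. A s \<omega>)" if "\<omega> \<in> space (F t)" for \<omega>
    using path_continuous[of \<omega>] that t by (auto simp: space_F elim: continuous_on_subset)
  show "(\<lambda>\<omega>. min (\<tau> \<omega>) t) \<in> borel_measurable (F t)"
    using stopping_time_onD(1)[OF st]
    by (intro stopping_time_measurable_le stopping_time_min stopping_time_const) auto
  show "min (\<tau> \<omega>) t \<in> {0..t}" if "\<omega> \<in> space (F t)" for \<omega>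
    using stopping_time_onD(2)[OF st, of \<omega>] that t by (auto simp: space_F)
qed

lemma remaining_increase_measurable:
  assumes st: "stopping_time_on M F T \<tau>"
  shows "remaining_increase \<tau> \<in> borel_measurable M"
proof -
  have "(\<lambda>\<omega>. A (min (\<tau> \<omega>) T) \<omega>) \<in> borel_measurable (F T)"
    using stopped_process_measurable[OF st horizon_nonneg] by simp
  moreover have "A T \<in> borel_measurable (F T)"
    using adapted horizon_nonneg by simp
  ultimately have "(\<lambda>\<omega>. A T \<omega> - A (min (\<tau> \<omega>) T) \<omega>) \<in> borel_measurable M"
    by (intro measurable_from_subalg[OF subalgebra_M] borel_measurable_diff)
  moreover have "A T \<omega> - A (min (\<tau> \<omega>) T) \<omega> = remaining_increase \<tau> \<omega>" if "\<omega> \<in> space M" for \<omega>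
    using stopping_time_onD(2)[OF st that] by (simp add: remaining_increase_def min_absorb1)
  ultimately show ?thesis
    by (simp cong: measurable_cong)
qed

lemma remaining_increase_nonneg:
  assumes "stopping_time_on M F T \<tau>" and "\<omega> \<in> space M"
  shows "0 \<le> remaining_increase \<tau> \<omega>"
  using stopping_time_onD(2)[OF assms] mono_onD[OF path_mono[OF assms(2)]] horizon_nonneg
  by (auto simp: remaining_increase_def)

lemma path_restricted:
  assumes "\<omega> \<in> space M" and "0 \<le> a"
  shows "continuous_on {a..T} (\<lambda>s. A s \<omega>)" and "mono_on {a..T} (\<lambda>s. A s \<omega>)"
  using path_continuous[OF assms(1)] path_mono[OF assms(1)] assms(2)
  by (auto elim: continuous_on_subset mono_on_subset)

lemma hitting_time_range:
  assumes st: "stopping_time_on M F T \<tau>" and \<omega>: "\<omega> \<in> space M"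
  shows "hitting_time \<tau> x \<omega> \<in> {\<tau> \<omega>..T}"
proof -
  have "0 \<le> \<tau> \<omega>" "\<tau> \<omega> \<le> T"
    using stopping_time_onD(2)[OF st \<omega>] by auto
  then show ?thesis
    unfolding hitting_time_def by (intro first_hit_in_interval path_restricted[OF \<omega>])
qed

lemma hitting_time_le_iff:
  assumes st: "stopping_time_on M F T \<tau>" and \<omega>: "\<omega> \<in> space M"
  shows "hitting_time \<tau> x \<omega> \<le> t \<longleftrightarrow> T \<le> t \<or> (\<tau> \<omega> \<le> t \<and> A (\<tau> \<omega>) \<omega> + x \<le> A t \<omega>)"
  using stopping_time_onD(2)[OF st \<omega>]
  by (auto simp: hitting_time_def first_hit_le_iff path_restricted[OF \<omega>])

lemma remaining_increase_hitting_time: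
  assumes st: "stopping_time_on M F T \<tau>" and \<omega>: "\<omega> \<in> space M"
    and x: "0 \<le> x" "x \<le> remaining_increase \<tau> \<omega>"
  shows "remaining_increase (hitting_time \<tau> x) \<omega> = remaining_increase \<tau> \<omega> - x"
proof -
  have "A (hitting_time \<tau> x \<omega>) \<omega> = A (\<tau> \<omega>) \<omega> + x"
    using stopping_time_onD(2)[OF st \<omega>] x unfolding hitting_time_def remaining_increase_def
    by (intro first_hit_value path_restricted[OF \<omega>]) auto
  then show ?thesis
    by (simp add: remaining_increase_def)
qed

definition increased_by :: "('a \<Rightarrow> real) \<Rightarrow> real \<Rightarrow> real \<Rightarrow> 'a \<Rightarrow> bool" where
  "increased_by \<tau> x t \<omega> \<longleftrightarrow> A (min (\<tau> \<omega>) (min t T)) \<omega> + x \<le> A (min t T) \<omega>"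

lemma increased_by_measurable:
  assumes st: "stopping_time_on M F T \<tau>" and t: "0 \<le> t"
  shows "Measurable.pred (F t) (increased_by \<tau> x t)"
proof -
  have t': "0 \<le> min t T" "min t T \<le> T" "min t T \<le> t"
    using t horizon_nonneg by auto
  have [measurable]: "(\<lambda>\<omega>. A (min (\<tau> \<omega>) (min t T)) \<omega>) \<in> borel_measurable (F (min t T))"
    "A (min t T) \<in> borel_measurable (F (min t T))"
    using stopped_process_measurable[OF st t'(1,2)] adapted t' by auto
  have "Measurable.pred (F (min t T)) (increased_by \<tau> x t)"
    unfolding increased_by_def by measurable
  then show ?thesis
    by (rule measurable_from_subalg[OF subalgebra_F[OF t'(3)]])
qed

lemma hitting_time_le_iff_increased_by:
  assumes st: "stopping_time_on M F T \<tau>" and \<omega>: "\<omega> \<in> space M"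
  shows "hitting_time \<tau> x \<omega> \<le> t \<longleftrightarrow> T \<le> t \<or> (\<tau> \<omega> \<le> t \<and> increased_by \<tau> x t \<omega>)"
  using hitting_time_le_iff[OF st \<omega>, of x t] stopping_time_onD(2)[OF st \<omega>]
  by (cases "T \<le> t") (auto simp: increased_by_def min_def)

lemma reached_and_hit_iff:
  assumes st: "stopping_time_on M F T \<tau>" and \<omega>: "\<omega> \<in> space M" and t: "0 \<le> t"
  shows "x \<le> remaining_increase \<tau> \<omega> \<and> hitting_time \<tau> x \<omega> \<le> t \<longleftrightarrow>
    \<tau> \<omega> \<le> t \<and> increased_by \<tau> x t \<omega>"
proof (cases "T \<le> t")
  case True
  then show ?thesis
    using hitting_time_le_iff[OF st \<omega>, of x t] stopping_time_onD(2)[OF st \<omega>]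
    by (simp add: increased_by_def remaining_increase_def min_absorb1 min_absorb2 algebra_simps)
next
  case False
  have "A t \<omega> \<le> A T \<omega>"
    using mono_onD[OF path_mono[OF \<omega>]] t False by auto
  moreover have "min (\<tau> \<omega>) t = \<tau> \<omega>" if "\<tau> \<omega> \<le> t"
    using that by simp
  ultimately show ?thesis
    using hitting_time_le_iff[OF st \<omega>, of x t] False
    by (auto simp: increased_by_def remaining_increase_def min_absorb1)
qed

lemma hitting_time_stopping_time:
  assumes st: "stopping_time_on M F T \<tau>"
  shows "stopping_time_on M F T (hitting_time \<tau> x)"
proof -
  have "Measurable.pred (F t) (\<lambda>\<omega>. hitting_time \<tau> x \<omega> \<le> t)" for t
  proof (cases "0 \<le> t")
    case True
    have "Measurable.pred (F t) (\<lambda>\<omega>. \<tau> \<omega> \<le> t)"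
      by (rule stopping_timeD[OF stopping_time_onD(1)[OF st]])
    then have "Measurable.pred (F t) (\<lambda>\<omega>. T \<le> t \<or> (\<tau> \<omega> \<le> t \<and> increased_by \<tau> x t \<omega>))"
      using increased_by_measurable[OF st True] by (intro pred_intros_logic measurable_const) auto
    moreover have "hitting_time \<tau> x \<omega> \<le> t \<longleftrightarrow> T \<le> t \<or> (\<tau> \<omega> \<le> t \<and> increased_by \<tau> x t \<omega>)"
      if "\<omega> \<in> space (F t)" for \<omega>
      using hitting_time_le_iff_increased_by[OF st] that by (simp add: space_F)
    ultimately show ?thesis
      by (rule measurable_cong[THEN iffD2, rotated])
  next
    case False
    have "\<not> hitting_time \<tau> x \<omega> \<le> t" if "\<omega> \<in> space M" for \<omega>
      using hitting_time_range[OF st that, of x] stopping_time_onD(2)[OF st that] False by auto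
    then have empty: "{\<omega> \<in> space (F t). hitting_time \<tau> x \<omega> \<le> t} = {}"
      by (auto simp: space_F)
    show ?thesis
      unfolding Measurable.pred_def empty by simp
  qed
  moreover have "hitting_time \<tau> x \<omega> \<in> {0..T}" if "\<omega> \<in> space M" for \<omega>
    using hitting_time_range[OF st that, of x] stopping_time_onD(2)[OF st that] by auto
  ultimately show ?thesis
    by (auto simp: stopping_time_on_def intro: stopping_timeI)
qed

lemma hitting_time_pre_sigma:
  assumes st: "stopping_time_on M F T \<tau>" and B: "B \<in> sets (pre_sigma \<tau>)"
  shows "{\<omega>\<in>B. x \<le> remaining_increase \<tau> \<omega>} \<in> sets (pre_sigma (hitting_time \<tau> x))"
proof (rule sets_pre_sigmaI[OF stopping_time_onD(1)[OF hitting_time_stopping_time[OF st]]])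
  fix t
  have B_space: "B \<subseteq> space M"
    using sets.sets_into_space[OF B] by (simp add: space_pre_sigma)
  show "{\<omega> \<in> {\<omega>\<in>B. x \<le> remaining_increase \<tau> \<omega>}. hitting_time \<tau> x \<omega> \<le> t} \<in> sets (F t)"
  proof (cases "0 \<le> t")
    case True
    have event_eq: "{\<omega> \<in> {\<omega>\<in>B. x \<le> remaining_increase \<tau> \<omega>}. hitting_time \<tau> x \<omega> \<le> t}
        = {\<omega> \<in> {\<omega>\<in>B. \<tau> \<omega> \<le> t}. increased_by \<tau> x t \<omega>}"
    proof (rule set_eqI)
      fix \<omega>
      show "\<omega> \<in> {\<omega> \<in> {\<omega>\<in>B. x \<le> remaining_increase \<tau> \<omega>}. hitting_time \<tau> x \<omega> \<le> t} \<longleftrightarrow>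
          \<omega> \<in> {\<omega> \<in> {\<omega>\<in>B. \<tau> \<omega> \<le> t}. increased_by \<tau> x t \<omega>}"
        using reached_and_hit_iff[OF st _ True, of \<omega> x] B_space by auto
    qed
    have "{\<omega>\<in>B. \<tau> \<omega> \<le> t} \<in> sets (F t)"
      using sets_pre_sigmaD[OF stopping_time_onD(1)[OF st] B] .
    then show ?thesis
      unfolding event_eq by (rule restricted_Collect_in_sets[OF _ increased_by_measurable[OF st True]])
  next
    case False
    have "\<not> hitting_time \<tau> x \<omega> \<le> t" if "\<omega> \<in> B" for \<omega>
      using hitting_time_range[OF st, of \<omega> x] stopping_time_onD(2)[OF st, of \<omega>] B_space that False
      by auto
    then have empty: "{\<omega> \<in> {\<omega>\<in>B. x \<le> remaining_increase \<tau> \<omega>}. hitting_time \<tau> x \<omega> \<le> t} = {}"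
      by auto
    show ?thesis
      unfolding empty by simp
  qed
qed

text \<open>Conditioning at the hitting time of level \<open>x\<close> turns the hypothesis on exponential
  moments of the remaining increase into the tail estimate needed for self-improvement.\<close>
lemma tail_bound_from_hitting_time:
  assumes finite: "finite_measure M" and st: "stopping_time_on M F T \<tau>"
    and B: "B \<in> sets (pre_sigma \<tau>)"
    and bound: "\<And>\<sigma>. stopping_time_on M F T \<sigma> \<Longrightarrow> AE \<omega> in M.
      nn_cond_exp M (pre_sigma \<sigma>) (\<lambda>\<omega>. ennreal (exp (k * remaining_increase \<sigma> \<omega>))) \<omega> \<le> C"
    and x: "0 \<le> x"
  shows "(\<integral>\<^sup>+\<omega>. indicator {\<omega>\<in>B. x \<le> remaining_increase \<tau> \<omega>} \<omega>
            * ennreal (exp (k * (remaining_increase \<tau> \<omega> - x))) \<partial>M)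
          \<le> C * emeasure M {\<omega>\<in>B. x \<le> remaining_increase \<tau> \<omega>}"
proof -
  define \<sigma> where "\<sigma> = hitting_time \<tau> x"
  define E where "E = {\<omega>\<in>B. x \<le> remaining_increase \<tau> \<omega>}"
  have st_\<sigma>: "stopping_time_on M F T \<sigma>"
    unfolding \<sigma>_def by (rule hitting_time_stopping_time[OF st])
  have E: "E \<in> sets (pre_sigma \<sigma>)"
    unfolding E_def \<sigma>_def by (rule hitting_time_pre_sigma[OF st B])
  have E_space: "E \<subseteq> space M"
    using sets.sets_into_space[OF B] by (auto simp: E_def space_pre_sigma)
  have "(\<integral>\<^sup>+\<omega>. indicator E \<omega> * ennreal (exp (k * (remaining_increase \<tau> \<omega> - x))) \<partial>M)
      = (\<integral>\<^sup>+\<omega>. indicator E \<omega> * ennreal (exp (k * remaining_increase \<sigma> \<omega>)) \<partial>M)"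
    using remaining_increase_hitting_time[OF st _ x] E_space
    by (intro nn_integral_cong) (auto simp: E_def \<sigma>_def split: split_indicator)
  also have "\<dots> \<le> C * emeasure M E"
    using remaining_increase_measurable[OF st_\<sigma>]
    by (intro set_nn_integral_le_of_nn_cond_exp_le[OF finite pre_sigma_subalgebra[OF st_\<sigma>] _ bound[OF st_\<sigma>] E])
      measurable
  finally show ?thesis
    unfolding E_def .
qed

lemma exp_qv_bounded_remaining_increase:
  "exp_qv_bounded M F T A b \<longleftrightarrow> (\<exists>C :: real. \<forall>\<tau>. stopping_time_on M F T \<tau> \<longrightarrow> (AE \<omega> in M.
      nn_cond_exp M (pre_sigma \<tau>) (\<lambda>\<omega>. ennreal (exp (b * remaining_increase \<tau> \<omega>))) \<omega> \<le> ennreal C))"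
  by (simp add: exp_qv_bounded_def remaining_increase_def)

lemma exp_qv_bounded_self_improves:
  assumes finite: "finite_measure M" and k: "0 < k" and bounded: "exp_qv_bounded M F T A k"
  shows "\<exists>k'. k < k' \<and> exp_qv_bounded M F T A k'"
proof -
  obtain C where C: "\<And>\<tau>. stopping_time_on M F T \<tau> \<Longrightarrow> AE \<omega> in M.
      nn_cond_exp M (pre_sigma \<tau>) (\<lambda>\<omega>. ennreal (exp (k * remaining_increase \<tau> \<omega>))) \<omega> \<le> ennreal C"
    using bounded unfolding exp_qv_bounded_remaining_increase by blast
  define c where "c = max C 1"
  have c: "1 \<le> c"
    by (simp add: c_def)
  have bound: "AE \<omega> in M. nn_cond_exp M (pre_sigma \<tau>)
      (\<lambda>\<omega>. ennreal (exp (k * remaining_increase \<tau> \<omega>))) \<omega> \<le> ennreal c"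
    if "stopping_time_on M F T \<tau>" for \<tau>
    using C[OF that] by eventually_elim (auto simp: c_def intro: order_trans ennreal_leI)
  have "exp_qv_bounded M F T A (improved_exponent k c)"
    unfolding exp_qv_bounded_remaining_increase
  proof (intro exI allI impI)
    fix \<tau> assume st: "stopping_time_on M F T \<tau>"
    note U_meas[measurable] = remaining_increase_measurable[OF st]
    show "AE \<omega> in M. nn_cond_exp M (pre_sigma \<tau>)
        (\<lambda>\<omega>. ennreal (exp (improved_exponent k c * remaining_increase \<tau> \<omega>))) \<omega>
          \<le> ennreal (improved_constant c)"
    proof (rule nn_cond_exp_le_of_set_nn_integral_le[OF finite pre_sigma_subalgebra[OF st]])
      fix B assume B: "B \<in> sets (pre_sigma \<tau>)"
      have "B \<in> sets M"
        using B pre_sigma_subalgebra[OF st] by (auto simp: subalgebra_def)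
      moreover have "B \<subseteq> space M"
        using sets.sets_into_space[OF B] by (simp add: space_pre_sigma)
      ultimately show "(\<integral>\<^sup>+\<omega>. indicator B \<omega> * ennreal (exp (improved_exponent k c * remaining_increase \<tau> \<omega>)) \<partial>M)
          \<le> ennreal (improved_constant c) * emeasure M B"
        using remaining_increase_nonneg[OF st] tail_bound_from_hitting_time[OF finite st B bound]
        by (intro improved_exponential_bound[OF finite U_meas _ _ k c]) auto
    qed auto
  qed
  then show ?thesis
    using improvement_constants(7)[OF k c] by blast
qed

end

text \<open>Without stopping times with values in \<open>[0,T]\<close> the boundedness condition is vacuous.\<close>
lemma exp_qv_bounded_negative_horizon:
  assumes "prob_space M" and "T < 0"
  shows "exp_qv_bounded M F T A b"
proof -
  obtain \<omega> where "\<omega> \<in> space M"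
    using prob_space.not_empty[OF assms(1)] by blast
  then have "\<not> stopping_time_on M F T \<tau>" for \<tau>
    using assms(2) by (fastforce simp: stopping_time_on_def)
  then show ?thesis
    by (simp add: exp_qv_bounded_def)
qed

lemma critical_exponent_lower_bound:
  assumes "0 \<le> b" and "exp_qv_bounded M F T A b"
  shows "ereal b \<le> critical_exponent M F T A"
  unfolding critical_exponent_def using assms by (intro Sup_upper) auto

lemma quadratic_variation_exp_bound_improves:
  assumes filtr: "usual_filtration M F T"
    and qv: "is_quadratic_variation M F T Mbar A"
    and k: "0 < k" and bounded: "exp_qv_bounded M F T A k"
  shows "\<exists>k'. k < k' \<and> exp_qv_bounded M F T A k'"
proof (cases "0 \<le> T")
  case True
  interpret continuous_increasing_process M F T A
    using filtr qv True
    by (auto simp: usual_filtration_def continuous_increasing_process_def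
        continuous_increasing_process_axioms_def is_quadratic_variation_def)
  show ?thesis
    using filtr exp_qv_bounded_self_improves[OF _ k bounded]
    by (simp add: usual_filtration_def prob_space_def)
next
  case False
  then show ?thesis
    using filtr exp_qv_bounded_negative_horizon[of M T]
    by (intro exI[of _ "k + 1"]) (auto simp: usual_filtration_def)
qed

theorem lemma6p2:
  fixes M :: "'a measure" and F :: "real \<Rightarrow> 'a measure" and T k :: real
    and Mbar A :: "real \<Rightarrow> 'a \<Rightarrow> real"
  assumes "usual_filtration M F T"
    and "continuous_martingale_on M F T Mbar"
    and "\<forall>\<omega> \<in> space M. Mbar 0 \<omega> = 0"
    and "is_quadratic_variation M F T Mbar A"
    and "k > 0"
    and "exp_qv_bounded M F T A k"
  shows "(\<exists>k'. k' > k \<and> exp_qv_bounded M F T A k') \<and> critical_exponent M F T A > ereal k"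
proof -
  obtain k' where k': "k < k'" "exp_qv_bounded M F T A k'"
    using quadratic_variation_exp_bound_improves[OF assms(1,4,5,6)] by blast
  have "ereal k < ereal k'"
    using k'(1) by simp
  also have "\<dots> \<le> critical_exponent M F T A"
    using k' assms(5) by (intro critical_exponent_lower_bound) auto
  finally show ?thesis
    using k' by blast
qed

end
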